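(* Let $C=(V,E)$ be a cycle graph of length $n\ge1$ with vertices $V=\{v_1,\dots,v_n\}$ in counterclockwise order and edges $E=\{e_1,\dots,e_n\}$, $e_i$ joining $v_i$ and $v_{i+1}$ (indices mod $n$). For a partition $\pi$ of $V$ the following are equivalent: (i) the quotient graph $C^\pi$ is a cactus; (ii) $\pi$ is non-crossing. Furthermore, if $\pi$ is non-crossing, the pads of $C^\pi$ correspond bijectively to the blocks of the Kreweras complement $\mathcal{K}(\pi)$, a block $B=\{e_{i_1},\dots,e_{i_k}\}$ ($i_1<\dots<i_k$) corresponding to the pad with edges $e_{i_1},\dots,e_{i_k}$ passing through the vertices $v_{i_1}$, $v_{i_1+1}\overset{\pi}{\sim}v_{i_2}$, $\dots$, $v_{i_{k-1}+1}\overset{\pi}{\sim}v_{i_k}$, $v_{i_k+1}\overset{\pi}{\sim}v_{i_1}$. Suppose in addition that $C$ is directed (not necessarily a directed cycle); call $e_i$ counterclockwise if $\mathrm{src}(e_i)=v_i$ and clockwise if $\mathrm{src}(e_i)=v_{i+1}$. Then for $\pi$ a partition of $V$ the following are equivalent: (I) $C^\pi$ is an oriented cactus; (II) $\pi$ is non-crossing and each block of $\mathcal{K}(\pi)$ contains only edges of one orientation.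
   Context: $C^\pi$ is the multigraph obtained from $C$ by identifying the vertices in each block of $\pi$ (edges are kept). A cactus is a connected multigraph in which every edge belongs to exactly one simple cycle (loops and pairs of parallel edges count as cycles); these cycles are its pads. An oriented cactus is a directed multigraph whose underlying multigraph is a cactus and each pad of which is a directed cycle. A partition $\pi$ of $V$ is non-crossing if there are no $a<b<c<d$ with $v_a,v_c$ in one block and $v_b,v_d$ in a different block. For non-crossing $\pi$, the Kreweras complement $\mathcal{K}(\pi)$ is the coarsest partition $\sigma$ of $E$ such that $\pi\cup\sigma$ is a non-crossing partition of the interlaced linearly ordered set $v_1<e_1<v_2<e_2<\dots<v_n<e_n$. *)

theory Defs
  imports Main "HOL-Library.Disjoint_Sets"
begin

text \<open>Multigraphs are given by a vertex set V, an edge set E and endpoint maps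
  src, tgt (for undirected multigraphs the order of the endpoints is ignored).\<close>

text \<open>A cyclic sequence of distinct vertices ws and distinct edges es, edge j joining
  ws!j and ws!((j+1) mod k) (in either direction). Loops (k = 1) and pairs of
  parallel edges (k = 2) are included.\<close>
definition ucycle_seq :: "'e set \<Rightarrow> ('e \<Rightarrow> 'v) \<Rightarrow> ('e \<Rightarrow> 'v) \<Rightarrow> 'v list \<Rightarrow> 'e list \<Rightarrow> bool" where
  "ucycle_seq E s t ws es \<longleftrightarrow> length ws = length es \<and> es \<noteq> [] \<and> distinct ws \<and> distinct es \<and>
     set es \<subseteq> E \<and>
     (\<forall>j<length es. (s (es!j) = ws!j \<and> t (es!j) = ws!((j+1) mod length es)) \<or>
                     (s (es!j) = ws!((j+1) mod length es) \<and> t (es!j) = ws!j))"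

definition dcycle_seq :: "'e set \<Rightarrow> ('e \<Rightarrow> 'v) \<Rightarrow> ('e \<Rightarrow> 'v) \<Rightarrow> 'v list \<Rightarrow> 'e list \<Rightarrow> bool" where
  "dcycle_seq E s t ws es \<longleftrightarrow> length ws = length es \<and> es \<noteq> [] \<and> distinct ws \<and> distinct es \<and>
     set es \<subseteq> E \<and>
     (\<forall>j<length es. s (es!j) = ws!j \<and> t (es!j) = ws!((j+1) mod length es))"

definition simple_cycle :: "'e set \<Rightarrow> ('e \<Rightarrow> 'v) \<Rightarrow> ('e \<Rightarrow> 'v) \<Rightarrow> 'e set \<Rightarrow> bool" where
  "simple_cycle E s t S \<longleftrightarrow> (\<exists>ws es. ucycle_seq E s t ws es \<and> S = set es)"

definition mg_connected :: "'v set \<Rightarrow> 'e set \<Rightarrow> ('e \<Rightarrow> 'v) \<Rightarrow> ('e \<Rightarrow> 'v) \<Rightarrow> bool" where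
  "mg_connected V E s t \<longleftrightarrow> V \<noteq> {} \<and>
     (\<forall>u\<in>V. \<forall>v\<in>V. (\<lambda>x y. \<exists>e\<in>E. (s e = x \<and> t e = y) \<or> (s e = y \<and> t e = x))\<^sup>*\<^sup>* u v)"

definition is_cactus :: "'v set \<Rightarrow> 'e set \<Rightarrow> ('e \<Rightarrow> 'v) \<Rightarrow> ('e \<Rightarrow> 'v) \<Rightarrow> bool" where
  "is_cactus V E s t \<longleftrightarrow> mg_connected V E s t \<and> (\<forall>e\<in>E. \<exists>!S. simple_cycle E s t S \<and> e \<in> S)"

definition pads :: "'e set \<Rightarrow> ('e \<Rightarrow> 'v) \<Rightarrow> ('e \<Rightarrow> 'v) \<Rightarrow> 'e set set" where
  "pads E s t = {S. simple_cycle E s t S}"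

definition is_oriented_cactus :: "'v set \<Rightarrow> 'e set \<Rightarrow> ('e \<Rightarrow> 'v) \<Rightarrow> ('e \<Rightarrow> 'v) \<Rightarrow> bool" where
  "is_oriented_cactus V E s t \<longleftrightarrow> is_cactus V E s t \<and>
     (\<forall>S\<in>pads E s t. \<exists>ws es. dcycle_seq E s t ws es \<and> S = set es)"

definition noncrossing :: "nat set set \<Rightarrow> bool" where
  "noncrossing P \<longleftrightarrow> \<not> (\<exists>a b c d. a < b \<and> b < c \<and> c < d \<and>
      (\<exists>B\<in>P. \<exists>B'\<in>P. B \<noteq> B' \<and> a \<in> B \<and> c \<in> B \<and> b \<in> B' \<and> d \<in> B'))"

text \<open>Cycle C with n vertices: vertex v_(i+1) is i, edge e_(i+1) is i, for i < n;
  edge i joins i and (i+1) mod n. Interlaced order: vertex i at 2i, edge i at 2i+1.\<close>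
definition interlace :: "nat set set \<Rightarrow> nat set set \<Rightarrow> nat set set" where
  "interlace \<pi> \<sigma> = (\<lambda>B. (\<lambda>i. 2*i) ` B) ` \<pi> \<union> (\<lambda>B. (\<lambda>i. 2*i+1) ` B) ` \<sigma>"

definition is_kreweras :: "nat \<Rightarrow> nat set set \<Rightarrow> nat set set \<Rightarrow> bool" where
  "is_kreweras n \<pi> \<sigma> \<longleftrightarrow> partition_on {..<n} \<sigma> \<and> noncrossing (interlace \<pi> \<sigma>) \<and>
     (\<forall>\<sigma>'. partition_on {..<n} \<sigma>' \<and> noncrossing (interlace \<pi> \<sigma>') \<longrightarrow>
            (\<forall>B'\<in>\<sigma>'. \<exists>B\<in>\<sigma>. B' \<subseteq> B))"

definition kreweras :: "nat \<Rightarrow> nat set set \<Rightarrow> nat set set" where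
  "kreweras n \<pi> = (THE \<sigma>. is_kreweras n \<pi> \<sigma>)"

definition blockof :: "nat set set \<Rightarrow> nat \<Rightarrow> nat set" where
  "blockof P i = (THE B. B \<in> P \<and> i \<in> B)"

definition cyc_a :: "nat \<Rightarrow> nat \<Rightarrow> nat" where "cyc_a n i = i"
definition cyc_b :: "nat \<Rightarrow> nat \<Rightarrow> nat" where "cyc_b n i = Suc i mod n"

definition dsrc :: "nat \<Rightarrow> (nat \<Rightarrow> bool) \<Rightarrow> nat \<Rightarrow> nat" where
  "dsrc n ccw i = (if ccw i then i else Suc i mod n)"
definition dtgt :: "nat \<Rightarrow> (nat \<Rightarrow> bool) \<Rightarrow> nat \<Rightarrow> nat" where
  "dtgt n ccw i = (if ccw i then Suc i mod n else i)"

text \<open>Quotient C^\<pi>: vertex set \<pi>, edge set {..<n}, endpoints mapped to their blocks.\<close>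
definition quot :: "nat set set \<Rightarrow> (nat \<Rightarrow> nat) \<Rightarrow> nat \<Rightarrow> nat set" where
  "quot \<pi> f i = blockof \<pi> (f i)"

end

theory Submission
  imports Defs
begin

text \<open>Call edges e_i and e_j equivalent if cutting the cycle at them separates no block of \<pi>.
  For non-crossing \<pi> the classes form the coarsest partition of the edges whose interlacing
  with \<pi> is non-crossing, i.e. the Kreweras complement. Around any cycle of C^\<pi> the side of
  such a cut changes exactly at e_i and e_j, so a simple cycle through e_i contains its whole
  class; and for non-crossing \<pi> the block after e_i contains the next edge of its class, so
  every class is a simple cycle. Hence C^\<pi> is a cactus whose pads are the classes.

  Conversely, in a cactus every pad lies inside a class: for inequivalent e and f the ends of e
  stay connected after deleting e and f. A crossing a < b < c < d would then make the edges
  e_a, ..., e_(b-1) a union of pads, of even degree at every vertex, although they form a walk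
  from the block of v_a to a different block.

  Finally, a pad is a directed cycle iff its edges are equally oriented, since at an
  orientation switch two consecutive edges of the pad have the same head.\<close>

lemma partition_on_ex1_block:
  assumes "partition_on A P" "x \<in> A"
  shows "\<exists>!B. B \<in> P \<and> x \<in> B"
  using assms unfolding partition_on_def disjoint_def by blast

lemma blockof_in:
  assumes "partition_on A P" "x \<in> A"
  shows "blockof P x \<in> P" "x \<in> blockof P x"
  using theI'[OF partition_on_ex1_block[OF assms]] unfolding blockof_def by blast+

lemma blockof_eq:
  assumes "partition_on A P" "B \<in> P" "x \<in> B"
  shows "blockof P x = B"
proof -
  have "x \<in> A" using assms partition_onD1 by blast
  with assms(1) have "\<exists>!B. B \<in> P \<and> x \<in> B" by (rule partition_on_ex1_block)
  then show ?thesis unfolding blockof_def by (rule the1_equality) (use assms in blast)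
qed

lemma noncrossingD:
  assumes "noncrossing S" "a < b" "b < c" "c < d" "X \<in> S" "Y \<in> S" "X \<noteq> Y"
    and "a \<in> X" "c \<in> X" "b \<in> Y" "d \<in> Y"
  shows False
  using assms unfolding noncrossing_def by blast

lemma Suc_mod_inj:
  assumes "p < k" "q < k" "Suc p mod k = Suc q mod k"
  shows "p = q"
  using assms by (cases "Suc p = k"; cases "Suc q = k") auto

lemma cyclic_switch_exists:
  fixes f :: "nat \<Rightarrow> bool"
  assumes "p < k" "q < k" "f p" "\<not> f q"
  obtains r where "r < k" "f r" "\<not> f (Suc r mod k)"
proof (rule ccontr)
  assume "\<not> thesis"
  then have no_switch: "f r \<Longrightarrow> r < k \<Longrightarrow> f (Suc r mod k)" for r
    using that by blast
  have "f ((p + m) mod k)" for m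
  proof (induction m)
    case (Suc m)
    then have "f (Suc ((p + m) mod k) mod k)" using no_switch assms(1) by simp
    then show ?case by (simp add: mod_Suc_eq)
  qed (use assms in simp)
  from this[of "q + k - p"] show False using assms by simp
qed

lemma cyclic_no_single_switch:
  fixes f :: "nat \<Rightarrow> bool"
  assumes "p0 < k" "\<forall>p<k. f p \<noteq> f (Suc p mod k) \<longleftrightarrow> p = p0"
  shows False
proof -
  let ?q = "Suc p0 mod k"
  have q: "?q < k" "f p0 \<noteq> f ?q" using assms by auto
  have only_p0: "r = p0" if "r < k" "f r \<noteq> f (Suc r mod k)" for r
    using assms(2) that by blast
  show False
  proof (cases "f p0")
    case True
    obtain r where "r < k" "\<not> f r" "f (Suc r mod k)"
      by (rule cyclic_switch_exists[where f = "\<lambda>r. \<not> f r" and p = ?q and q = p0])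
        (use q True assms in auto)
    then have "r = p0" using only_p0 by simp
    then show False using \<open>\<not> f r\<close> True by simp
  next
    case False
    obtain r where "r < k" "f r" "\<not> f (Suc r mod k)"
      by (rule cyclic_switch_exists[where f = f and p = ?q and q = p0])
        (use q False assms in auto)
    then have "r = p0" using only_p0 by simp
    then show False using \<open>f r\<close> False by simp
  qed
qed

lemma sum_lessThan_Suc_mod:
  fixes g :: "nat \<Rightarrow> 'a::comm_monoid_add"
  assumes "0 < k"
  shows "(\<Sum>p<k. g (Suc p mod k)) = (\<Sum>p<k. g p)"
proof -
  obtain k' where k: "k = Suc k'" using assms by (cases k) auto
  have "(\<Sum>p<Suc k'. g (Suc p mod Suc k')) = (\<Sum>p<k'. g (Suc p mod Suc k')) + g 0"
    by (simp add: sum.lessThan_Suc)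
  also have "(\<Sum>p<k'. g (Suc p mod Suc k')) = (\<Sum>p<k'. g (Suc p))"
    by (rule sum.cong) auto
  also have "(\<Sum>p<k'. g (Suc p)) + g 0 = (\<Sum>p<Suc k'. g p)"
    by (subst sum.lessThan_Suc_shift) (simp add: add.commute)
  finally show ?thesis using k by simp
qed

lemma even_sum_consecutive:
  fixes g :: "nat \<Rightarrow> nat"
  assumes "a \<le> b"
  shows "even ((\<Sum>l\<in>{a..<b}. g l + g (Suc l)) + g a + g b)"
  using assms
proof (induction b rule: dec_induct)
  case (step b)
  have "(\<Sum>l\<in>{a..<Suc b}. g l + g (Suc l)) + g a + g (Suc b)
      = ((\<Sum>l\<in>{a..<b}. g l + g (Suc l)) + g a + g b) + 2 * g (Suc b)"
    using step.hyps by (simp add: sum.atLeastLessThan_Suc)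
  also have "even \<dots>"
    using step.IH dvd_triv_left[of 2 "g (Suc b)"] by (rule dvd_add)
  finally show ?case .
qed simp

section \<open>Cycles, paths and pads in multigraphs\<close>

lemma ucycle_seq_ends:
  assumes "ucycle_seq E s t ws es" "p < length es"
  shows "{s (es!p), t (es!p)} = {ws!p, ws!(Suc p mod length es)}"
  using assms unfolding ucycle_seq_def by auto

lemma ucycle_seq_incident:
  assumes C: "ucycle_seq E s t ws es" and "l < length es" "p < length es"
    and "ws!p \<in> {s (es!l), t (es!l)}"
  shows "p = l \<or> p = Suc l mod length es"
proof -
  have "length ws = length es" "distinct ws" "0 < length es" using C assms(2)
    by (auto simp: ucycle_seq_def)
  then show ?thesis using ucycle_seq_ends[OF C assms(2)] assms(2-4)
    by (auto simp: nth_eq_iff_index_eq)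
qed

lemma ucycle_seq_other_edge:
  assumes C: "ucycle_seq E s t ws es" and "e \<in> set es" "s e \<noteq> t e" "v \<in> {s e, t e}"
  obtains f where "f \<in> set es" "f \<noteq> e" "v \<in> {s f, t f}"
proof -
  define k where "k = length es"
  obtain m where m: "m < k" "es!m = e" using assms(2) by (auto simp: in_set_conv_nth k_def)
  have ends: "{s e, t e} = {ws!m, ws!(Suc m mod k)}" using ucycle_seq_ends[OF C] m k_def by metis
  have des: "distinct es" using C by (simp add: ucycle_seq_def)
  have "Suc m mod k \<noteq> m" using ends assms(3) by auto
  then have k2: "2 \<le> k" using m by (cases "k = 1") auto
  show thesis
  proof (cases "v = ws!(Suc m mod k)")
    case True
    let ?m1 = "Suc m mod k"
    have "?m1 < k" using k2 by simp
    moreover have "es!?m1 \<noteq> e"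
      using m \<open>?m1 < k\<close> des \<open>?m1 \<noteq> m\<close> by (auto simp: nth_eq_iff_index_eq k_def)
    moreover have "v \<in> {s (es!?m1), t (es!?m1)}"
      using ucycle_seq_ends[OF C, of ?m1] True \<open>?m1 < k\<close> k_def by simp
    ultimately show thesis using that nth_mem[of ?m1 es] k_def by blast
  next
    case False
    define m0 where "m0 = (m + k - 1) mod k"
    have m0: "m0 < k" "Suc m0 mod k = m" using m k2 by (auto simp: m0_def mod_Suc_eq)
    then have "m0 \<noteq> m" using \<open>Suc m mod k \<noteq> m\<close> by auto
    then have "es!m0 \<noteq> e" using m m0 des by (auto simp: nth_eq_iff_index_eq k_def)
    moreover have "v = ws!m" using False ends assms(4) by auto
    then have "v \<in> {s (es!m0), t (es!m0)}" using ucycle_seq_ends[OF C, of m0] m0 k_def by simp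
    ultimately show thesis using that nth_mem[of m0 es] m0 k_def by blast
  qed
qed

text \<open>Follow es to an edge e_r of es' whose successor is not in es'. The vertex between them
  lies on a second edge of es', which must be an edge of es at that vertex, i.e. e_r or its
  successor.\<close>

lemma ucycle_seq_subset_eq:
  assumes C: "ucycle_seq E s t ws es" and C': "ucycle_seq E s t ws' es'"
    and sub: "set es' \<subseteq> set es"
  shows "set es' = set es"
proof (rule ccontr)
  assume "set es' \<noteq> set es"
  define k where "k = length es"
  obtain x where "x \<in> set es" "x \<notin> set es'" using sub \<open>set es' \<noteq> set es\<close> by blast
  then obtain q where q: "q < k" "es!q \<notin> set es'" by (auto simp: in_set_conv_nth k_def)
  have "es' \<noteq> []" using C' by (simp add: ucycle_seq_def)
  then obtain y where "y \<in> set es'" by fastforce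
  have "y \<in> set es" using sub \<open>y \<in> set es'\<close> by blast
  then obtain p where "p < k" "es!p = y" by (auto simp: in_set_conv_nth k_def)
  then have p: "p < k" "es!p \<in> set es'" using \<open>y \<in> set es'\<close> by auto
  obtain r where r: "r < k" "es!r \<in> set es'" "es!(Suc r mod k) \<notin> set es'"
    by (rule cyclic_switch_exists[where f = "\<lambda>r. es!r \<in> set es'", OF p(1) q(1) p(2) q(2)])
  let ?r1 = "Suc r mod k"
  have "?r1 < k" "?r1 \<noteq> r" using r by auto
  moreover have "length ws = k" "distinct ws" using C by (auto simp: ucycle_seq_def k_def)
  ultimately have neq: "ws!r \<noteq> ws!?r1" using r by (simp add: nth_eq_iff_index_eq)
  have ends: "{s (es!r), t (es!r)} = {ws!r, ws!?r1}" using ucycle_seq_ends[OF C] r k_def by metis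
  have "s (es!r) \<noteq> t (es!r)"
  proof
    assume "s (es!r) = t (es!r)"
    with ends have "{ws!r, ws!?r1} = {s (es!r)}" by simp
    then show False using neq by (metis insertCI singletonD)
  qed
  moreover have "ws!?r1 \<in> {s (es!r), t (es!r)}" using ends by simp
  ultimately obtain f where f: "f \<in> set es'" "f \<noteq> es!r" "ws!?r1 \<in> {s f, t f}"
    by (rule ucycle_seq_other_edge[OF C' r(2)])
  have "f \<in> set es" using sub f(1) by blast
  then obtain l where l: "l < k" "es!l = f" by (auto simp: in_set_conv_nth k_def)
  have "?r1 = l \<or> ?r1 = Suc l mod k"
    using ucycle_seq_incident[OF C l(1)[unfolded k_def] \<open>?r1 < k\<close>[unfolded k_def]] l(2) f(3)
    by (simp add: k_def)
  then show False
  proof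
    assume "?r1 = l"
    then show False using l f(1) r(3) by simp
  next
    assume "?r1 = Suc l mod k"
    then have "l = r" using Suc_mod_inj[OF l(1) r(1)] by simp
    then show False using l f(2) by simp
  qed
qed

definition adj :: "'e set \<Rightarrow> ('e \<Rightarrow> 'v) \<Rightarrow> ('e \<Rightarrow> 'v) \<Rightarrow> 'v \<Rightarrow> 'v \<Rightarrow> bool" where
  "adj F s t x y \<longleftrightarrow> (\<exists>e\<in>F. {s e, t e} = {x, y})"

lemma mg_connected_iff_adj:
  "mg_connected V E s t \<longleftrightarrow> V \<noteq> {} \<and> (\<forall>u\<in>V. \<forall>v\<in>V. (adj E s t)\<^sup>*\<^sup>* u v)"
  unfolding mg_connected_def adj_def[abs_def] by (simp add: doubleton_eq_iff)

lemma rtranclp_adj_sym: "(adj F s t)\<^sup>*\<^sup>* x y \<Longrightarrow> (adj F s t)\<^sup>*\<^sup>* y x"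
proof -
  have "symp (adj F s t)" by (auto simp: symp_def adj_def)
  then show "(adj F s t)\<^sup>*\<^sup>* x y \<Longrightarrow> (adj F s t)\<^sup>*\<^sup>* y x" using symp_rtranclp by (metis sympD)
qed

definition upath :: "'e set \<Rightarrow> ('e \<Rightarrow> 'v) \<Rightarrow> ('e \<Rightarrow> 'v) \<Rightarrow> 'v list \<Rightarrow> 'e list \<Rightarrow> bool" where
  "upath F s t ws es \<longleftrightarrow> length ws = Suc (length es) \<and> distinct ws \<and> set es \<subseteq> F \<and>
     (\<forall>p<length es. {s (es!p), t (es!p)} = {ws!p, ws!Suc p})"

lemma rtranclp_adj_upath:
  assumes "(adj F s t)\<^sup>*\<^sup>* u v"
  obtains ws es where "upath F s t ws es" "hd ws = u" "last ws = v"
  using assms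
proof (induction arbitrary: thesis rule: rtranclp_induct)
  case base
  show ?case by (rule base[of "[u]" "[]"]) (simp_all add: upath_def)
next
  case (step y z)
  obtain ws es where P: "upath F s t ws es" "hd ws = u" "last ws = y" using step.IH by blast
  obtain g where g: "g \<in> F" "{s g, t g} = {y, z}" using step.hyps(2) unfolding adj_def by blast
  have L: "length ws = Suc (length es)" and "ws \<noteq> []" using P(1) by (auto simp: upath_def)
  show ?case
  proof (cases "z \<in> set ws")
    case True
    \<comment> \<open>cut the path at the earlier visit of z\<close>
    then obtain q where q: "q < length ws" "ws!q = z" by (metis in_set_conv_nth)
    have "upath F s t (take (Suc q) ws) (take q es)"
      using P(1) q unfolding upath_def by (auto simp: min_def dest: in_set_takeD)
    moreover have "hd (take (Suc q) ws) = u" using P(2) \<open>ws \<noteq> []\<close> by simp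
    moreover have "last (take (Suc q) ws) = z" using q by (simp add: take_Suc_conv_app_nth)
    ultimately show ?thesis by (rule step.prems)
  next
    case False
    have "ws ! length es = y" using P(3) \<open>ws \<noteq> []\<close> L by (simp add: last_conv_nth)
    then have "upath F s t (ws @ [z]) (es @ [g])"
      using P(1) False g L unfolding upath_def by (auto simp: nth_append less_Suc_eq)
    then show ?thesis using step.prems P(2) \<open>ws \<noteq> []\<close> by simp
  qed
qed

lemma upath_distinct_edges:
  assumes "upath F s t ws es"
  shows "distinct es"
proof -
  have L: "length ws = Suc (length es)" and D: "distinct ws"
    and E: "\<forall>p<length es. {s (es!p), t (es!p)} = {ws!p, ws!Suc p}"
    using assms by (auto simp: upath_def)
  show ?thesis
  proof (subst distinct_conv_nth, intro allI impI)
    fix i j assume ij: "i < length es" "j < length es" "i \<noteq> j"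
    show "es!i \<noteq> es!j"
    proof
      assume "es!i = es!j"
      then have "{ws!i, ws!Suc i} = {ws!j, ws!Suc j}" using E ij by metis
      then have "(i = j \<and> Suc i = Suc j) \<or> (i = Suc j \<and> Suc i = j)"
        using D L ij by (auto simp: doubleton_eq_iff nth_eq_iff_index_eq)
      then show False using ij by auto
    qed
  qed
qed

lemma ucycle_through_edge:
  assumes "e \<in> E" "F \<subseteq> E" "e \<notin> F" "(adj F s t)\<^sup>*\<^sup>* (t e) (s e)"
  obtains ws es where "ucycle_seq E s t ws es" "e \<in> set es" "set es \<subseteq> insert e F"
proof -
  obtain ws es where P: "upath F s t ws es" "hd ws = t e" "last ws = s e"
    by (rule rtranclp_adj_upath[OF assms(4)])
  define m where "m = length es"
  have L: "length ws = Suc m" and D: "distinct ws" and S: "set es \<subseteq> F"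
    and E: "\<forall>p<m. {s (es!p), t (es!p)} = {ws!p, ws!Suc p}"
    using P(1) by (auto simp: upath_def m_def)
  have h0: "ws!0 = t e" using P(2) L by (cases ws) auto
  have hm: "ws!m = s e" using P(3) L by (metis diff_Suc_1 last_conv_nth list.size(3) nat.distinct(1))
  have "ucycle_seq E s t ws (es @ [e])"
    unfolding ucycle_seq_def
  proof (intro conjI allI impI)
    show "distinct (es @ [e])" using upath_distinct_edges[OF P(1)] S assms(3) by auto
    fix j assume j: "j < length (es @ [e])"
    show "s ((es @ [e]) ! j) = ws ! j \<and> t ((es @ [e]) ! j) = ws ! ((j + 1) mod length (es @ [e])) \<or>
          s ((es @ [e]) ! j) = ws ! ((j + 1) mod length (es @ [e])) \<and> t ((es @ [e]) ! j) = ws ! j"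
    proof (cases "j < m")
      case True
      then have "{s (es!j), t (es!j)} = {ws!j, ws!Suc j}" using E by blast
      then show ?thesis using True by (auto simp: nth_append m_def doubleton_eq_iff)
    next
      case False
      then have "j = m" using j m_def by simp
      then show ?thesis using h0 hm by (simp add: nth_append m_def)
    qed
  qed (use L m_def D S assms in auto)
  then show thesis using S by (intro that[of ws "es @ [e]"]) auto
qed

lemma simple_cycle_subset: "simple_cycle E s t S \<Longrightarrow> S \<subseteq> E"
  unfolding simple_cycle_def ucycle_seq_def by auto

definition pad_of :: "'e set \<Rightarrow> ('e \<Rightarrow> 'v) \<Rightarrow> ('e \<Rightarrow> 'v) \<Rightarrow> 'e \<Rightarrow> 'e set" where
  "pad_of E s t e = (THE S. simple_cycle E s t S \<and> e \<in> S)"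

lemma
  assumes "is_cactus V E s t" "e \<in> E"
  shows simple_cycle_pad_of: "simple_cycle E s t (pad_of E s t e)"
    and mem_pad_of: "e \<in> pad_of E s t e"
  using theI'[of "\<lambda>S. simple_cycle E s t S \<and> e \<in> S"] assms
  unfolding is_cactus_def pad_of_def by blast+

lemma pad_of_unique:
  assumes "is_cactus V E s t" "simple_cycle E s t S" "e \<in> S"
  shows "pad_of E s t e = S"
proof -
  have "e \<in> E" using assms(2,3) simple_cycle_subset by blast
  then have "\<exists>!S. simple_cycle E s t S \<and> e \<in> S" using assms(1) unfolding is_cactus_def by blast
  then show ?thesis unfolding pad_of_def by (rule the1_equality) (use assms in blast)
qed

lemma doubleton_of_bool_sum:
  "{a, b} = {c, d} \<Longrightarrow> of_bool (a = x) + of_bool (b = x) = (of_bool (c = x) + of_bool (d = x) :: nat)"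
  by (auto simp: doubleton_eq_iff)

definition incidences :: "'e set \<Rightarrow> ('e \<Rightarrow> 'v) \<Rightarrow> ('e \<Rightarrow> 'v) \<Rightarrow> 'v \<Rightarrow> nat" where
  "incidences F s t x = (\<Sum>e\<in>F. of_bool (s e = x) + of_bool (t e = x))"

lemma even_incidences_ucycle:
  assumes C: "ucycle_seq E s t ws es"
  shows "even (incidences (set es) s t x)"
proof -
  define k where "k = length es"
  define h where "h e = of_bool (s e = x) + (of_bool (t e = x) :: nat)" for e
  define g where "g p = (of_bool (ws!p = x) :: nat)" for p
  have des: "distinct es" and k0: "0 < k" using C by (auto simp: ucycle_seq_def k_def)
  have "incidences (set es) s t x = sum_list (map h es)"
    unfolding incidences_def h_def using des by (simp add: sum_list_distinct_conv_sum_set)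
  also have "\<dots> = (\<Sum>p<k. h (es!p))"
    by (simp add: sum_list_sum_nth atLeast0LessThan k_def)
  also have "\<dots> = (\<Sum>p<k. g p + g (Suc p mod k))"
  proof (rule sum.cong[OF refl])
    fix p assume "p \<in> {..<k}"
    then have "{s (es!p), t (es!p)} = {ws!p, ws!(Suc p mod k)}"
      using ucycle_seq_ends[OF C] k_def by blast
    then show "h (es!p) = g p + g (Suc p mod k)"
      unfolding h_def g_def by (rule doubleton_of_bool_sum)
  qed
  also have "\<dots> = 2 * (\<Sum>p<k. g p)"
    using sum_lessThan_Suc_mod[OF k0, of g] by (simp add: sum.distrib)
  finally show ?thesis by simp
qed

lemma even_incidences_union_of_pads:
  assumes cact: "is_cactus V E s t" and "G \<subseteq> E" "finite G"
    and closed: "\<forall>e\<in>G. pad_of E s t e \<subseteq> G"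
  shows "even (incidences G s t x)"
proof -
  let ?pads = "pad_of E s t ` G"
  have G: "G = \<Union> ?pads" using closed mem_pad_of[OF cact] assms(2) by blast
  have disj: "S \<inter> S' = {}" if "S \<in> ?pads" "S' \<in> ?pads" "S \<noteq> S'" for S S'
  proof (rule ccontr)
    assume "S \<inter> S' \<noteq> {}"
    then obtain f where "f \<in> S" "f \<in> S'" by blast
    moreover have "simple_cycle E s t S" "simple_cycle E s t S'"
      using that simple_cycle_pad_of[OF cact] assms(2) by blast+
    ultimately have "S = pad_of E s t f" "S' = pad_of E s t f"
      using pad_of_unique[OF cact] by metis+
    then show False using that(3) by simp
  qed
  have "finite S" if "S \<in> ?pads" for S using that closed assms(3) finite_subset by blast
  then have "incidences (\<Union> ?pads) s t x = (\<Sum>S\<in>?pads. incidences S s t x)"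
    unfolding incidences_def using sum.Union_disjoint[of ?pads] disj by simp
  then have "incidences G s t x = (\<Sum>S\<in>?pads. incidences S s t x)" using G by simp
  also have "even \<dots>"
  proof (rule dvd_sum)
    fix S assume "S \<in> ?pads"
    then have "simple_cycle E s t S" using simple_cycle_pad_of[OF cact] assms(2) by blast
    then obtain ws es where C: "ucycle_seq E s t ws es" and "S = set es"
      unfolding simple_cycle_def by blast
    then show "even (incidences S s t x)" using even_incidences_ucycle[OF C] by simp
  qed
  finally show ?thesis .
qed

lemma ucycle_seq_iff_doubleton:
  "ucycle_seq E s t ws es \<longleftrightarrow> length ws = length es \<and> es \<noteq> [] \<and> distinct ws \<and> distinct es \<and>
     set es \<subseteq> E \<and> (\<forall>j<length es. {s (es!j), t (es!j)} = {ws!j, ws!((j+1) mod length es)})"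
  unfolding ucycle_seq_def by (simp add: doubleton_eq_iff)

context
  fixes s t s' t' :: "'e \<Rightarrow> 'v"
  assumes same_ends: "\<And>e. {s' e, t' e} = {s e, t e}"
begin

lemma simple_cycle_same_ends: "simple_cycle E s' t' = simple_cycle E s t"
  unfolding simple_cycle_def[abs_def] ucycle_seq_iff_doubleton same_ends ..

lemma pads_same_ends: "pads E s' t' = pads E s t"
  unfolding pads_def simple_cycle_same_ends ..

lemma is_cactus_same_ends: "is_cactus V E s' t' = is_cactus V E s t"
  unfolding is_cactus_def mg_connected_iff_adj adj_def same_ends simple_cycle_same_ends ..

end

lemma dcycle_seq_tgt_inj_on:
  assumes "dcycle_seq E s t ws es"
  shows "inj_on t (set es)"
proof (rule inj_onI)
  define k where "k = length es"
  have lw: "length ws = k" and dws: "distinct ws" and des: "distinct es"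
    and tgt: "\<forall>j<k. t (es!j) = ws!(Suc j mod k)"
    using assms unfolding dcycle_seq_def k_def by auto
  fix e f assume "e \<in> set es" "f \<in> set es" "t e = t f"
  then obtain i j where ij: "i < k" "j < k" "es!i = e" "es!j = f"
    by (auto simp: in_set_conv_nth k_def)
  then have "ws!(Suc i mod k) = ws!(Suc j mod k)" using tgt \<open>t e = t f\<close> by metis
  then have "Suc i mod k = Suc j mod k" using dws lw ij by (simp add: nth_eq_iff_index_eq)
  then show "e = f" using Suc_mod_inj ij by metis
qed

lemma dcycle_seq_rev:
  assumes "dcycle_seq E t s ws es"
  shows "dcycle_seq E s t (map (\<lambda>m. ws!((length es - m) mod length es)) [0..<length es]) (rev es)"
proof -
  define k where "k = length es"
  have lw: "length ws = k" and k0: "0 < k" and dws: "distinct ws" and des: "distinct es"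
    and sub: "set es \<subseteq> E" and ends: "\<forall>j<k. t (es!j) = ws!j \<and> s (es!j) = ws!(Suc j mod k)"
    using assms unfolding dcycle_seq_def k_def by auto
  have "inj_on (\<lambda>m. ws!((k - m) mod k)) {0..<k}"
  proof
    fix a b assume ab: "a \<in> {0..<k}" "b \<in> {0..<k}" "ws!((k - a) mod k) = ws!((k - b) mod k)"
    then have "(k - a) mod k = (k - b) mod k" using lw k0 dws by (simp add: nth_eq_iff_index_eq)
    then show "a = b" using ab by (cases "a = 0"; cases "b = 0") auto
  qed
  then have dist: "distinct (map (\<lambda>m. ws!((k - m) mod k)) [0..<k])" by (simp add: distinct_map)
  show ?thesis
    unfolding dcycle_seq_def k_def[symmetric] length_rev
  proof (intro conjI allI impI)
    fix j assume j: "j < k"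
    have "rev es ! j = es ! (k - Suc j)" "k - Suc j < k" using j by (simp_all add: rev_nth k_def)
    moreover have "Suc (k - Suc j) mod k = (k - j) mod k" using j by (simp add: Suc_diff_Suc)
    ultimately show "s (rev es ! j) = map (\<lambda>m. ws!((k - m) mod k)) [0..<k] ! j"
      using ends j by simp
    have "(k - Suc j mod k) mod k = k - Suc j"
    proof (cases "Suc j < k")
      case False
      then have "Suc j = k" using j by simp
      then show ?thesis by simp
    qed simp
    then show "t (rev es ! j) = map (\<lambda>m. ws!((k - m) mod k)) [0..<k] ! ((j + 1) mod k)"
      using ends j \<open>rev es ! j = es ! (k - Suc j)\<close> \<open>k - Suc j < k\<close> by simp
  qed (use dist k0 des sub k_def in auto)
qed

lemma dcycle_seq_imp_ucycle_seq: "dcycle_seq E s t ws es \<Longrightarrow> ucycle_seq E s t ws es"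
  unfolding dcycle_seq_def ucycle_seq_def by auto

lemma dcycle_seq_cong:
  assumes "dcycle_seq E s t ws es" "\<forall>e\<in>set es. s' e = s e \<and> t' e = t e"
  shows "dcycle_seq E s' t' ws es"
  using assms unfolding dcycle_seq_def by (metis nth_mem)

section \<open>The Kreweras complement via cuts of the cycle\<close>

text \<open>Deleting the edges e_i and e_j splits the cycle into the vertices x with arc i j x and
  the remaining ones.\<close>

definition arc :: "nat \<Rightarrow> nat \<Rightarrow> nat \<Rightarrow> bool" where
  "arc i j x \<longleftrightarrow> min i j < x \<and> x \<le> max i j"

lemma arc_sym: "arc i j x = arc j i x"
  unfolding arc_def by auto

lemma arc_xor: "arc i l x = (arc i j x \<noteq> arc j l x)"
  unfolding arc_def by (auto simp: min_def max_def)

locale cycle_partition =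
  fixes n :: nat and \<pi> :: "nat set set"
  assumes n_pos: "1 \<le> n" and partition: "partition_on {..<n} \<pi>"
begin

abbreviation blk :: "nat \<Rightarrow> nat set" where "blk \<equiv> blockof \<pi>"

abbreviation qa :: "nat \<Rightarrow> nat set" where "qa \<equiv> quot \<pi> (cyc_a n)"
abbreviation qb :: "nat \<Rightarrow> nat set" where "qb \<equiv> quot \<pi> (cyc_b n)"

lemma qa_eq [simp]: "qa e = blk e" and qb_eq [simp]: "qb e = blk (Suc e mod n)"
  by (simp_all add: quot_def cyc_a_def cyc_b_def)

lemma blk_in: "x < n \<Longrightarrow> blk x \<in> \<pi>"
  using blockof_in[OF partition] by simp

lemma mem_blk: "x < n \<Longrightarrow> x \<in> blk x"
  using blockof_in[OF partition] by simp

lemma blk_eq: "P \<in> \<pi> \<Longrightarrow> x \<in> P \<Longrightarrow> blk x = P"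
  using blockof_eq[OF partition] .

lemma block_lt: "P \<in> \<pi> \<Longrightarrow> x \<in> P \<Longrightarrow> x < n"
  using partition unfolding partition_on_def by auto

lemma block_nonempty: "P \<in> \<pi> \<Longrightarrow> P \<noteq> {}"
  using partition unfolding partition_on_def by auto

definition kequiv :: "nat \<Rightarrow> nat \<Rightarrow> bool" where
  "kequiv i j \<longleftrightarrow> (\<forall>P\<in>\<pi>. \<forall>x\<in>P. \<forall>y\<in>P. arc i j x = arc i j y)"

lemma kequivD: "kequiv i j \<Longrightarrow> P \<in> \<pi> \<Longrightarrow> x \<in> P \<Longrightarrow> y \<in> P \<Longrightarrow> arc i j x = arc i j y"
  unfolding kequiv_def by blast

lemma kequiv_refl: "kequiv i i"
  unfolding kequiv_def arc_def by auto

lemma kequiv_sym: "kequiv i j \<Longrightarrow> kequiv j i"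
  unfolding kequiv_def using arc_sym by metis

lemma kequiv_trans: "kequiv i j \<Longrightarrow> kequiv j l \<Longrightarrow> kequiv i l"
  unfolding kequiv_def using arc_xor[of i l _ j] by metis

definition krel :: "nat rel" where
  "krel = {(i, j). i < n \<and> j < n \<and> kequiv i j}"

definition kclass :: "nat \<Rightarrow> nat set" where
  "kclass i = krel `` {i}"

definition kblocks :: "nat set set" where
  "kblocks = {..<n} // krel"

lemma equiv_krel: "equiv {..<n} krel"
proof (rule equivI)
  show "refl_on {..<n} krel" unfolding refl_on_def krel_def using kequiv_refl by auto
  show "sym krel" unfolding sym_def krel_def using kequiv_sym by auto
  show "trans krel" unfolding trans_def krel_def using kequiv_trans by blast
  show "krel \<subseteq> {..<n} \<times> {..<n}" unfolding krel_def by auto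
qed

lemma partition_on_kblocks: "partition_on {..<n} kblocks"
  unfolding kblocks_def by (rule partition_on_quotient[OF equiv_krel])

lemma mem_kclass: "j \<in> kclass i \<longleftrightarrow> i < n \<and> j < n \<and> kequiv i j"
  unfolding kclass_def krel_def by auto

lemma kclass_self: "i < n \<Longrightarrow> i \<in> kclass i"
  using kequiv_refl mem_kclass by auto

lemma kequiv_kclass: "x \<in> kclass i \<Longrightarrow> y \<in> kclass i \<Longrightarrow> kequiv x y"
  unfolding mem_kclass using kequiv_sym kequiv_trans by blast

lemma kclass_eq: "j \<in> kclass i \<Longrightarrow> kclass j = kclass i"
  unfolding set_eq_iff mem_kclass using kequiv_sym kequiv_trans by blast

lemma kclass_subset: "kclass i \<subseteq> {..<n}"
  using mem_kclass by auto

lemma finite_kclass: "finite (kclass i)"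
  using kclass_subset finite_subset by blast

lemma kblocks_iff: "B \<in> kblocks \<longleftrightarrow> (\<exists>i<n. B = kclass i)"
  unfolding kblocks_def kclass_def quotient_def by auto

lemma kblock_eq_kclass:
  assumes "B \<in> kblocks" "i \<in> B"
  shows "B = kclass i"
proof -
  obtain i0 where "B = kclass i0" using assms(1) kblocks_iff by blast
  then show ?thesis using kclass_eq assms(2) by simp
qed

lemma kequiv_kblock: "B \<in> kblocks \<Longrightarrow> i \<in> B \<Longrightarrow> j \<in> B \<Longrightarrow> kequiv i j"
  using kblock_eq_kclass kequiv_kclass by metis

lemma kequiv_noncrossing:
  assumes "i < i'" "i' < j" "j < j'" "kequiv i j" "kequiv i' j'"
  shows "kequiv i i'"
  unfolding kequiv_def
proof (intro ballI)
  fix P x y assume P: "P \<in> \<pi>" "x \<in> P" "y \<in> P"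
  have no_split: False if "x' \<in> P" "y' \<in> P" "arc i i' x'" "\<not> arc i i' y'" for x' y'
  proof -
    have "arc i j x' = arc i j y'" "arc i' j' x' = arc i' j' y'"
      using kequivD assms(4,5) P(1) that(1,2) by blast+
    then show False using that(3,4) assms(1-3) unfolding arc_def by auto
  qed
  show "arc i i' x = arc i i' y" using no_split[of x y] no_split[of y x] P by blast
qed

lemma kblocks_noncrossing:
  assumes "C \<in> kblocks" "D \<in> kblocks" "i \<in> C" "j \<in> C" "i' \<in> D" "j' \<in> D"
    and "i < i'" "i' < j" "j < j'"
  shows "C = D"
proof -
  have "kequiv i i'" using kequiv_noncrossing kequiv_kblock assms by blast
  moreover have "i < n" "i' < n" using assms(1-3,5) kblock_eq_kclass kclass_subset by blast+
  ultimately have "i' \<in> kclass i" using mem_kclass by blast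
  then show ?thesis using assms(1-3,5) kblock_eq_kclass kclass_eq by metis
qed

lemma noncrossing_interlace_kblocks:
  assumes nc: "noncrossing \<pi>"
  shows "noncrossing (interlace \<pi> kblocks)"
  unfolding noncrossing_def
proof (rule notI, elim exE conjE bexE)
  fix a b c d X Y
  assume abcd: "a < b" "b < c" "c < d"
    and XY: "X \<in> interlace \<pi> kblocks" "Y \<in> interlace \<pi> kblocks" "X \<noteq> Y"
    and mem: "a \<in> X" "c \<in> X" "b \<in> Y" "d \<in> Y"
  consider (VV) P Q where "P \<in> \<pi>" "Q \<in> \<pi>" "X = (\<lambda>i. 2*i) ` P" "Y = (\<lambda>i. 2*i) ` Q"
    | (VE) P C where "P \<in> \<pi>" "C \<in> kblocks" "X = (\<lambda>i. 2*i) ` P" "Y = (\<lambda>i. 2*i+1) ` C"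
    | (EV) C P where "P \<in> \<pi>" "C \<in> kblocks" "X = (\<lambda>i. 2*i+1) ` C" "Y = (\<lambda>i. 2*i) ` P"
    | (EE) C D where "C \<in> kblocks" "D \<in> kblocks" "X = (\<lambda>i. 2*i+1) ` C" "Y = (\<lambda>i. 2*i+1) ` D"
    using XY(1,2) unfolding interlace_def by blast
  then show False
  proof cases
    case VV
    then obtain x y x' y' where "x \<in> P" "y \<in> P" "x' \<in> Q" "y' \<in> Q"
      "a = 2*x" "c = 2*y" "b = 2*x'" "d = 2*y'" using mem by blast
    moreover have "P \<noteq> Q" using VV XY(3) by blast
    ultimately show False using noncrossingD[OF nc, of x x' y y' P Q] abcd VV by auto
  next
    case VE
    then obtain x y i j where xy: "x \<in> P" "y \<in> P" "a = 2*x" "c = 2*y"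
      and ij: "i \<in> C" "j \<in> C" "b = 2*i+1" "d = 2*j+1" using mem by blast
    then have "arc i j x = arc i j y" using kequivD[OF kequiv_kblock] VE(1,2) xy by blast
    then show False using abcd xy ij unfolding arc_def by auto
  next
    case EV
    then obtain x y i j where xy: "x \<in> P" "y \<in> P" "b = 2*x" "d = 2*y"
      and ij: "i \<in> C" "j \<in> C" "a = 2*i+1" "c = 2*j+1" using mem by blast
    then have "arc i j x = arc i j y" using kequivD[OF kequiv_kblock] EV(1,2) xy by blast
    then show False using abcd xy ij unfolding arc_def by auto
  next
    case EE
    then obtain i j i' j' where ij: "i \<in> C" "j \<in> C" "a = 2*i+1" "c = 2*j+1"
      and ij': "i' \<in> D" "j' \<in> D" "b = 2*i'+1" "d = 2*j'+1" using mem by blast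
    then have "C = D" using kblocks_noncrossing[OF EE(1,2)] abcd by simp
    then show False using EE XY(3) by simp
  qed
qed

lemma kequiv_if_noncrossing_interlace:
  assumes nc: "noncrossing (interlace \<pi> \<sigma>)" and B: "B \<in> \<sigma>" "i \<in> B" "j \<in> B"
  shows "kequiv i j"
  unfolding kequiv_def
proof (intro ballI)
  fix P x y assume P: "P \<in> \<pi>" "x \<in> P" "y \<in> P"
  let ?X = "(\<lambda>t. 2*t) ` P" and ?Y = "(\<lambda>t. 2*t+1) ` B"
  have X: "?X \<in> interlace \<pi> \<sigma>" and Y: "?Y \<in> interlace \<pi> \<sigma>"
    using P(1) B(1) unfolding interlace_def by blast+
  have XY: "?X \<noteq> ?Y"
  proof
    assume "?X = ?Y"
    then have "2*x \<in> ?Y" using P(2) by blast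
    then obtain t where "2*x = 2*t+1" by blast
    then show False by presburger
  qed
  have no_split: False if xy': "x' \<in> P" "y' \<in> P" "arc i j x'" "\<not> arc i j y'" for x' y'
  proof -
    define lo where "lo = min i j"
    define hi where "hi = max i j"
    have lohi: "2*lo+1 \<in> ?Y" "2*hi+1 \<in> ?Y" using B by (auto simp: lo_def hi_def min_def max_def)
    have x'y': "2*x' \<in> ?X" "2*y' \<in> ?X" using xy' by blast+
    have x': "lo < x'" "x' \<le> hi" and y': "y' \<le> lo \<or> hi < y'"
      using xy'(3,4) unfolding arc_def lo_def hi_def by auto
    from y' show False
    proof
      assume "y' \<le> lo"
      then show False using noncrossingD[OF nc _ _ _ X Y XY x'y'(2,1) lohi] x' by simp
    next
      assume "hi < y'"
      then show False using noncrossingD[OF nc _ _ _ Y X XY[symmetric] lohi x'y'] x' by simp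
    qed
  qed
  show "arc i j x = arc i j y" using no_split[of x y] no_split[of y x] P by blast
qed

lemma is_kreweras_kblocks:
  assumes "noncrossing \<pi>"
  shows "is_kreweras n \<pi> kblocks"
  unfolding is_kreweras_def
proof (intro conjI allI impI ballI)
  show "partition_on {..<n} kblocks" by (rule partition_on_kblocks)
  show "noncrossing (interlace \<pi> kblocks)" by (rule noncrossing_interlace_kblocks[OF assms])
  fix \<sigma> B assume \<sigma>: "partition_on {..<n} \<sigma> \<and> noncrossing (interlace \<pi> \<sigma>)" and B: "B \<in> \<sigma>"
  then obtain i where i: "i \<in> B" using partition_onD3 by fastforce
  have "B \<subseteq> {..<n}" using \<sigma> B partition_onD1 by blast
  then have "B \<subseteq> kclass i"
    using kequiv_if_noncrossing_interlace[OF conjunct2[OF \<sigma>] B i] i mem_kclass by blast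
  moreover have "kclass i \<in> kblocks" using i \<open>B \<subseteq> {..<n}\<close> kblocks_iff by blast
  ultimately show "\<exists>C\<in>kblocks. B \<subseteq> C" by blast
qed

lemma kreweras_eq_kblocks:
  assumes "noncrossing \<pi>"
  shows "kreweras n \<pi> = kblocks"
  unfolding kreweras_def
proof (rule the_equality)
  show "is_kreweras n \<pi> kblocks" by (rule is_kreweras_kblocks[OF assms])
  fix \<sigma> assume \<sigma>: "is_kreweras n \<pi> \<sigma>"
  have "refines {..<n} \<sigma> kblocks" "refines {..<n} kblocks \<sigma>"
    using \<sigma> is_kreweras_kblocks[OF assms] unfolding is_kreweras_def refines_def by blast+
  then show "\<sigma> = kblocks" by (rule refines_asym)
qed

section \<open>Pads of the quotient by a non-crossing partition\<close>

text \<open>Number of steps from vertex i forward to vertex x; it ranges over 1..n, with fwd i i = n.\<close>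

definition fwd :: "nat \<Rightarrow> nat \<Rightarrow> nat" where
  "fwd i x = (if x \<le> i then x + n - i else x - i)"

lemma fwd_pos: "i < n \<Longrightarrow> 0 < fwd i x"
  and fwd_le: "i < n \<Longrightarrow> x < n \<Longrightarrow> fwd i x \<le> n"
  unfolding fwd_def by auto

lemma fwd_self: "i < n \<Longrightarrow> fwd i i = n"
  unfolding fwd_def by simp

lemma fwd_inj: "i < n \<Longrightarrow> x < n \<Longrightarrow> y < n \<Longrightarrow> fwd i x = fwd i y \<Longrightarrow> x = y"
  unfolding fwd_def by (auto split: if_splits)

lemma fwd_add_mod: "i < n \<Longrightarrow> 0 < d \<Longrightarrow> d \<le> n \<Longrightarrow> fwd i ((i + d) mod n) = d"
  unfolding fwd_def by (cases "i + d < n") (auto simp: mod_if)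

lemma add_fwd_mod: "i < n \<Longrightarrow> x < n \<Longrightarrow> (i + fwd i x) mod n = x"
  unfolding fwd_def by (auto simp: mod_if)

lemma fwd_Suc_mod: "i < n \<Longrightarrow> fwd i (Suc i mod n) = 1"
  using fwd_add_mod[of i 1] n_pos by simp

lemma fwd_le_iff_arc:
  "i < n \<Longrightarrow> j < n \<Longrightarrow> x < n \<Longrightarrow> i \<noteq> j \<Longrightarrow>
    fwd i x \<le> fwd i j \<longleftrightarrow> (if i < j then arc i j x else \<not> arc i j x)"
  unfolding fwd_def arc_def by auto

lemma fwd_less_iff: "i < n \<Longrightarrow> x < n \<Longrightarrow> y < n \<Longrightarrow>
    fwd i x < fwd i y \<longleftrightarrow> (i < x \<and> (y \<le> i \<or> x < y)) \<or> (x \<le> i \<and> y \<le> i \<and> x < y)"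
  unfolding fwd_def by auto

text \<open>Non-crossing is invariant under rotation: four points in cyclic order starting at i
  are, in the linear order, one of the four rotations of a, b, c, e.\<close>

lemma fwd_crossing:
  assumes nc: "noncrossing \<pi>" and "i < n" and PQ: "P \<in> \<pi>" "Q \<in> \<pi>" "P \<noteq> Q"
    and mem: "a \<in> P" "c \<in> P" "b \<in> Q" "e \<in> Q"
    and "fwd i a < fwd i b" "fwd i b < fwd i c" "fwd i c < fwd i e"
  shows False
proof -
  have "a < n" "b < n" "c < n" "e < n" using mem PQ block_lt by auto
  then have "(a<b \<and> b<c \<and> c<e) \<or> (b<c \<and> c<e \<and> e<a) \<or> (c<e \<and> e<a \<and> a<b) \<or> (e<a \<and> a<b \<and> b<c)"
    using assms(2,10-12) fwd_less_iff[OF assms(2)]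
    by (cases "a \<le> i"; cases "b \<le> i"; cases "c \<le> i"; cases "e \<le> i") auto
  then show False
    using noncrossingD[OF nc _ _ _ PQ mem] noncrossingD[OF nc _ _ _ PQ(2,1) PQ(3)[symmetric] mem(3,4,2,1)]
      noncrossingD[OF nc _ _ _ PQ mem(2,1,4,3)] noncrossingD[OF nc _ _ _ PQ(2,1) PQ(3)[symmetric] mem(4,3,1,2)]
    by blast
qed

lemma kequiv_farthest_of_next_block:
  assumes nc: "noncrossing \<pi>" and i: "i < n" and m: "m \<in> blk (Suc i mod n)"
    and farthest: "\<forall>x\<in>blk (Suc i mod n). fwd i x \<le> fwd i m"
  shows "kequiv i m"
proof (cases "m = i")
  case False
  define v where "v = Suc i mod n"
  define P where "P = blk v"
  have v: "v < n" "fwd i v = 1" using n_pos i fwd_Suc_mod by (auto simp: v_def)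
  have P: "P \<in> \<pi>" "v \<in> P" "m \<in> P" using blk_in mem_blk v m by (auto simp: P_def v_def)
  have mn: "m < n" using P block_lt by blast
  have same_side: False
    if Q: "Q \<in> \<pi>" "x \<in> Q" "y \<in> Q" and xy: "fwd i x \<le> fwd i m" "fwd i m < fwd i y" for Q x y
  proof (cases "Q = P")
    case True
    then show False using farthest xy Q P_def v_def by force
  next
    case False
    have "x < n" using Q block_lt by blast
    have "x \<noteq> v" "x \<noteq> m" using False Q P blk_eq by metis+
    then have "fwd i v < fwd i x" "fwd i x < fwd i m"
      using xy(1) v fwd_pos[OF i, of x] fwd_inj[OF i \<open>x < n\<close>] mn by fastforce+
    then show False using fwd_crossing[OF nc i P(1) Q(1) _ P(2,3) Q(2,3)] False xy(2) by blast
  qed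
  show ?thesis
    unfolding kequiv_def
  proof (intro ballI)
    fix Q x y assume Q: "Q \<in> \<pi>" "x \<in> Q" "y \<in> Q"
    then have "fwd i x \<le> fwd i m \<longleftrightarrow> fwd i y \<le> fwd i m"
      using same_side[of Q x y] same_side[of Q y x] by (meson not_le)
    moreover have "x < n" "y < n" using Q block_lt by blast+
    ultimately show "arc i m x = arc i m y"
      using fwd_le_iff_arc[OF i mn _ False[symmetric]] by (auto split: if_splits)
  qed
qed (simp add: kequiv_refl)

text \<open>The vertex m of the block after edge i that is farthest from i is Kreweras-equivalent
  to i, so it is not nearer than i'; and it is not farther, as the cut at i and i' separates
  nothing. Hence m = i'.\<close>

lemma next_block_eq:
  assumes nc: "noncrossing \<pi>" and i: "i < n" "i' < n" "kequiv i i'"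
    and nearest: "\<forall>j<n. kequiv i j \<longrightarrow> fwd i i' \<le> fwd i j"
  shows "blk (Suc i mod n) = blk i'"
proof -
  define v where "v = Suc i mod n"
  define P where "P = blk v"
  have v: "v < n" "fwd i v = 1" using n_pos i fwd_Suc_mod by (auto simp: v_def)
  have P: "P \<in> \<pi>" "v \<in> P" using blk_in mem_blk v by (auto simp: P_def)
  have "finite P" using P(1) block_lt finite_nat_set_iff_bounded by blast
  then obtain m where m: "m \<in> P" "\<forall>x\<in>P. fwd i x \<le> fwd i m"
    using Max_in[of "fwd i ` P"] Max_ge[of "fwd i ` P"] P(2) by fastforce
  have mn: "m < n" using m P block_lt by blast
  have "fwd i m \<le> fwd i i'"
  proof (cases "i = i'")
    case True
    then show ?thesis using fwd_le[OF i(1) mn] fwd_self i by simp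
  next
    case False
    have "arc i i' v = arc i i' m" using kequivD[OF i(3) P(1)] P(2) m(1) by blast
    moreover have "fwd i v \<le> fwd i i'" using v fwd_pos[OF i(1), of i'] by simp
    ultimately show ?thesis
      using fwd_le_iff_arc[OF i(1,2) v(1) False] fwd_le_iff_arc[OF i(1,2) mn False]
      by (simp split: if_splits)
  qed
  moreover have "fwd i i' \<le> fwd i m"
    using nearest kequiv_farthest_of_next_block[OF nc i(1)] m mn by (simp add: P_def v_def)
  ultimately have "m = i'" using fwd_inj[OF i(1) mn i(2)] by simp
  then show ?thesis using blk_eq P(1) m(1) by (simp add: P_def v_def)
qed

lemma sorted_list_cyclic_successor:
  assumes A: "A \<subseteq> {..<n}" and L: "L = sorted_list_of_set A" and j: "j < length L" and "m \<in> A"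
  shows "fwd (L!j) (L!(Suc j mod length L)) \<le> fwd (L!j) m"
proof -
  define k where "k = length L"
  have "finite A" using A finite_subset by blast
  then have setL: "set L = A" and sL: "sorted L" and dL: "distinct L" using L by auto
  obtain q where q: "q < k" "L!q = m" using \<open>m \<in> A\<close> setL by (auto simp: in_set_conv_nth k_def)
  have lt: "L!j < n" "m < n" using A setL j \<open>m \<in> A\<close> nth_mem by blast+
  have mono: "L!a \<le> L!b" if "a \<le> b" "b < k" for a b
    using sL that by (simp add: sorted_nth_mono k_def)
  show ?thesis
  proof (cases "Suc j < k")
    case True
    have "L!j \<noteq> L!Suc j" using dL True by (simp add: nth_eq_iff_index_eq k_def)
    then have "L!j < L!Suc j" using mono[of j "Suc j"] True by simp
    moreover have "m \<le> L!j \<or> L!Suc j \<le> m" using mono q True by (cases "q \<le> j") auto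
    moreover have "L!Suc j < n" using A setL True nth_mem k_def by blast
    ultimately show ?thesis using True lt unfolding fwd_def k_def by auto
  next
    case False
    then have "Suc j = k" using j k_def by simp
    then have "m \<le> L!j" "L!0 \<le> m" using mono q by auto
    then show ?thesis using \<open>Suc j = k\<close> lt unfolding fwd_def k_def by auto
  qed
qed

lemma blk_inj_on_kclass: "inj_on blk (kclass i)"
proof (rule inj_onI)
  fix x y assume xy: "x \<in> kclass i" "y \<in> kclass i" "blk x = blk y"
  then have "x < n" "y < n" using kclass_subset by blast+
  then have "arc x y x = arc x y y"
    using kequivD[OF kequiv_kclass[OF xy(1,2)] blk_in] mem_blk xy(3) by metis
  then show "x = y" unfolding arc_def by (cases "x < y") auto
qed

lemma kclass_next_block:
  assumes nc: "noncrossing \<pi>" and L: "L = sorted_list_of_set (kclass i)" and j: "j < length L"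
  shows "blk (Suc (L!j) mod n) = blk (L!(Suc j mod length L))"
proof -
  have "0 < length L" using j by linarith
  then have mem: "L!j \<in> kclass i" "L!(Suc j mod length L) \<in> kclass i"
    using L j finite_kclass nth_mem by (metis set_sorted_list_of_set mod_less_divisor)+
  then have "kequiv (L!j) m \<longleftrightarrow> m \<in> kclass i" if "m < n" for m
    using that kequiv_kclass kequiv_trans kequiv_sym mem_kclass by meson
  then have "\<forall>m<n. kequiv (L!j) m \<longrightarrow> fwd (L!j) (L!(Suc j mod length L)) \<le> fwd (L!j) m"
    using sorted_list_cyclic_successor[OF kclass_subset L j] by blast
  then show ?thesis
    using next_block_eq[OF nc] mem kclass_subset kequiv_kclass by blast
qed

lemma kclass_dcycle:
  assumes nc: "noncrossing \<pi>" and i: "i < n" and L: "L = sorted_list_of_set (kclass i)"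
  shows "dcycle_seq {..<n} qa qb (map blk L) L"
  unfolding dcycle_seq_def
proof (intro conjI allI impI)
  have set: "set L = kclass i" using L finite_kclass by simp
  then show "L \<noteq> []" using kclass_self[OF i] by auto
  show "distinct (map blk L)" using blk_inj_on_kclass set L by (simp add: distinct_map)
  show "set L \<subseteq> {..<n}" using set kclass_subset by simp
  fix j assume j: "j < length L"
  then have "Suc j mod length L < length L" by (metis mod_less_divisor not_less0 not_less_iff_gr_or_eq)
  then show "qb (L!j) = map blk L ! ((j + 1) mod length L)"
    using kclass_next_block[OF nc L j] by simp
qed (simp_all add: L)

lemma arc_switch_iff:
  assumes "e < n" "j < n" "e \<noteq> j" "l < n"
  shows "arc e j l \<noteq> arc e j (Suc l mod n) \<longleftrightarrow> l = e \<or> l = j"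
  using assms by (cases "Suc l < n"; cases "e < j") (auto simp: arc_def mod_if)

lemma kclass_subset_ucycle:
  assumes C: "ucycle_seq {..<n} qa qb ws es" and e: "e \<in> set es"
  shows "kclass e \<subseteq> set es"
proof
  fix j assume "j \<in> kclass e"
  then have j: "j < n" "kequiv e j" using mem_kclass by auto
  show "j \<in> set es"
  proof (rule ccontr)
    assume jn: "j \<notin> set es"
    define k where "k = length es"
    have sub: "set es \<subseteq> {..<n}" and des: "distinct es" using C by (auto simp: ucycle_seq_def)
    have en: "e < n" "e \<noteq> j" using e sub jn by auto
    obtain p0 where p0: "p0 < k" "es!p0 = e" using e by (auto simp: in_set_conv_nth k_def)
    define side where "side X \<longleftrightarrow> (\<exists>x\<in>X. arc e j x)" for X
    have side_blk: "side (blk x) = arc e j x" if "x < n" for x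
      using kequivD[OF j(2) blk_in[OF that] _ mem_blk[OF that]] mem_blk[OF that]
      unfolding side_def by blast
    have "side (ws!p) \<noteq> side (ws!(Suc p mod k)) \<longleftrightarrow> p = p0" if p: "p < k" for p
    proof -
      have "es!p \<in> set es" using p k_def by simp
      then have "es!p < n" "es!p \<noteq> j" using sub jn by blast+
      have "{blk (es!p), blk (Suc (es!p) mod n)} = {ws!p, ws!(Suc p mod k)}"
        using ucycle_seq_ends[OF C, of p] p k_def by simp
      then have "side (ws!p) \<noteq> side (ws!(Suc p mod k)) \<longleftrightarrow>
          side (blk (es!p)) \<noteq> side (blk (Suc (es!p) mod n))"
        by (auto simp: doubleton_eq_iff)
      also have "\<dots> \<longleftrightarrow> es!p = e"
        using side_blk arc_switch_iff[OF en(1) j(1) en(2)] \<open>es!p < n\<close> \<open>es!p \<noteq> j\<close> n_pos by simp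
      also have "\<dots> \<longleftrightarrow> p = p0" using des p p0 k_def by (auto simp: nth_eq_iff_index_eq)
      finally show ?thesis .
    qed
    then show False using cyclic_no_single_switch[of p0 k "\<lambda>p. side (ws!p)"] p0(1) by blast
  qed
qed

lemma rtranclp_adj_forward:
  assumes "a \<le> b" "\<forall>d. a \<le> d \<and> d < b \<longrightarrow> (i + d) mod n \<in> F"
  shows "(adj F qa qb)\<^sup>*\<^sup>* (blk ((i + a) mod n)) (blk ((i + b) mod n))"
  using assms
proof (induction b rule: dec_induct)
  case (step b)
  have "\<forall>d. a \<le> d \<and> d < b \<longrightarrow> (i + d) mod n \<in> F" using step.prems by simp
  then have "(adj F qa qb)\<^sup>*\<^sup>* (blk ((i + a) mod n)) (blk ((i + b) mod n))" by (rule step.IH)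
  moreover have "(i + b) mod n \<in> F" using step.prems step.hyps by simp
  then have "adj F qa qb (blk ((i + b) mod n)) (blk ((i + Suc b) mod n))"
    unfolding adj_def by (intro bexI[of _ "(i + b) mod n"]) (simp_all add: mod_Suc_eq)
  ultimately show ?case by (rule rtranclp.rtrancl_into_rtrancl)
qed simp

lemma mg_connected_quot: "mg_connected \<pi> {..<n} qa qb"
  unfolding mg_connected_iff_adj
proof (intro conjI ballI)
  show "\<pi> \<noteq> {}" using blk_in[of 0] n_pos by auto
  have reach: "(adj {..<n} qa qb)\<^sup>*\<^sup>* (blk 0) P" if P: "P \<in> \<pi>" for P
  proof -
    obtain x where x: "x \<in> P" using block_nonempty[OF P] by blast
    then have "x < n" "blk x = P" using P block_lt blk_eq by auto
    then show ?thesis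
      using rtranclp_adj_forward[where a = 0 and b = x and F = "{..<n}" and i = 0] n_pos by simp
  qed
  fix P Q assume "P \<in> \<pi>" "Q \<in> \<pi>"
  then show "(adj {..<n} qa qb)\<^sup>*\<^sup>* P Q"
    using reach rtranclp_adj_sym rtranclp_trans by metis
qed

lemma simple_cycle_eq_kclass:
  assumes nc: "noncrossing \<pi>" and S: "simple_cycle {..<n} qa qb S" and e: "e \<in> S"
  shows "S = kclass e"
proof -
  obtain ws es where C: "ucycle_seq {..<n} qa qb ws es" and S: "S = set es"
    using S unfolding simple_cycle_def by blast
  have "e < n" using C e S by (auto simp: ucycle_seq_def)
  define L where "L = sorted_list_of_set (kclass e)"
  have "ucycle_seq {..<n} qa qb (map blk L) L"
    using kclass_dcycle[OF nc \<open>e < n\<close> L_def] by (rule dcycle_seq_imp_ucycle_seq)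
  moreover have "set L = kclass e" using finite_kclass L_def by simp
  ultimately show ?thesis
    using ucycle_seq_subset_eq[OF C] kclass_subset_ucycle[OF C] e S by blast
qed

lemma simple_cycle_kclass:
  assumes nc: "noncrossing \<pi>" and "i < n"
  shows "simple_cycle {..<n} qa qb (kclass i)"
  using dcycle_seq_imp_ucycle_seq[OF kclass_dcycle[OF assms refl]] finite_kclass
  unfolding simple_cycle_def by (metis set_sorted_list_of_set)

lemma noncrossing_is_cactus:
  assumes nc: "noncrossing \<pi>"
  shows "is_cactus \<pi> {..<n} qa qb"
  unfolding is_cactus_def
proof (intro conjI ballI)
  show "mg_connected \<pi> {..<n} qa qb" by (rule mg_connected_quot)
  fix e assume "e \<in> {..<n}"
  then show "\<exists>!S. simple_cycle {..<n} qa qb S \<and> e \<in> S"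
    using simple_cycle_kclass[OF nc] kclass_self simple_cycle_eq_kclass[OF nc] by blast
qed

lemma noncrossing_pads:
  assumes nc: "noncrossing \<pi>"
  shows "pads {..<n} qa qb = kblocks"
proof (intro set_eqI iffI)
  fix S assume "S \<in> pads {..<n} qa qb"
  then have S: "simple_cycle {..<n} qa qb S" unfolding pads_def by simp
  then obtain ws es where "ucycle_seq {..<n} qa qb ws es" "S = set es"
    unfolding simple_cycle_def by blast
  then obtain e where "e \<in> S" "e < n" by (cases es) (auto simp: ucycle_seq_def)
  then show "S \<in> kblocks" using simple_cycle_eq_kclass[OF nc S] kblocks_iff by blast
next
  fix B assume "B \<in> kblocks"
  then show "B \<in> pads {..<n} qa qb"
    using simple_cycle_kclass[OF nc] kblocks_iff by (auto simp: pads_def)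
qed

lemma kblock_cycle:
  assumes nc: "noncrossing \<pi>" and "B \<in> kblocks"
  shows "(\<forall>j<length (sorted_list_of_set B).
            blk (Suc (sorted_list_of_set B ! j) mod n) =
            blk (sorted_list_of_set B ! ((j+1) mod length (sorted_list_of_set B)))) \<and>
         ucycle_seq {..<n} qa qb (map blk (sorted_list_of_set B)) (sorted_list_of_set B)"
proof -
  obtain i where "i < n" "B = kclass i" using assms(2) kblocks_iff by blast
  then show ?thesis
    using kclass_next_block[OF nc refl] dcycle_seq_imp_ucycle_seq[OF kclass_dcycle[OF nc _ refl]]
    by simp
qed

section \<open>Quotients that are cacti\<close>

lemma not_kequiv_split:
  assumes "e < n" "f < n" "\<not> kequiv e f"
  obtains P x y where "P \<in> \<pi>" "x \<in> P" "y \<in> P" "fwd e x \<le> fwd e f" "fwd e f < fwd e y"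
proof -
  obtain P x y where P: "P \<in> \<pi>" "x \<in> P" "y \<in> P" "arc e f x \<noteq> arc e f y"
    using assms(3) unfolding kequiv_def by blast
  have "e \<noteq> f" using assms(3) kequiv_refl by blast
  moreover have "x < n" "y < n" using P block_lt by blast+
  ultimately have "fwd e x \<le> fwd e f \<longleftrightarrow> \<not> fwd e y \<le> fwd e f"
    using fwd_le_iff_arc[OF assms(1,2)] P(4) by (simp split: if_splits)
  then show thesis using that P by (meson not_le)
qed

text \<open>Walk forward from the head of e to x, jump to y in the same block of \<pi> on the other
  side of the cut at e and f, and walk forward on to the tail of e.\<close>

lemma rtranclp_adj_avoiding:
  assumes e: "e < n" and f: "f < n" and "\<not> kequiv e f"
  shows "(adj ({..<n} - {e, f}) qa qb)\<^sup>*\<^sup>* (qb e) (qa e)"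
proof -
  let ?F = "{..<n} - {e, f}"
  obtain P x y where P: "P \<in> \<pi>" "x \<in> P" "y \<in> P" and xy: "fwd e x \<le> fwd e f" "fwd e f < fwd e y"
    using not_kequiv_split[OF assms] .
  have "x < n" "y < n" using P block_lt by blast+
  have avoid: "(e + d) mod n \<in> ?F" if "0 < d" "d < n" "d \<noteq> fwd e f" for d
  proof -
    have "fwd e ((e + d) mod n) = d" using that fwd_add_mod[OF e] by simp
    then have "(e + d) mod n \<noteq> e" using that fwd_self[OF e] by auto
    moreover have "(e + d) mod n \<noteq> f" using that \<open>fwd e ((e + d) mod n) = d\<close> by auto
    moreover have "(e + d) mod n < n" using e by simp
    ultimately show ?thesis by simp
  qed
  have "fwd e x \<le> n" "fwd e f \<le> n" "0 < fwd e x" using fwd_le[OF e] fwd_pos[OF e] f \<open>x < n\<close> by blast+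
  then have "\<forall>d. 1 \<le> d \<and> d < fwd e x \<longrightarrow> (e + d) mod n \<in> ?F" using xy avoid by simp
  then have "(adj ?F qa qb)\<^sup>*\<^sup>* (blk ((e + 1) mod n)) (blk ((e + fwd e x) mod n))"
    using \<open>0 < fwd e x\<close> by (intro rtranclp_adj_forward) simp_all
  moreover have "\<forall>d. fwd e y \<le> d \<and> d < n \<longrightarrow> (e + d) mod n \<in> ?F" using xy avoid by simp
  then have "(adj ?F qa qb)\<^sup>*\<^sup>* (blk ((e + fwd e y) mod n)) (blk ((e + n) mod n))"
    using fwd_le[OF e \<open>y < n\<close>] by (intro rtranclp_adj_forward) simp_all
  moreover have "blk ((e + fwd e x) mod n) = blk ((e + fwd e y) mod n)"
    using add_fwd_mod[OF e] \<open>x < n\<close> \<open>y < n\<close> blk_eq P by simp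
  ultimately show ?thesis using e by simp
qed

text \<open>Otherwise the walk above closes up to a simple cycle through e that misses f.\<close>

lemma pad_of_subset_kclass:
  assumes cact: "is_cactus \<pi> {..<n} qa qb" and e: "e < n"
  shows "pad_of {..<n} qa qb e \<subseteq> kclass e"
proof
  fix f assume f: "f \<in> pad_of {..<n} qa qb e"
  have "f < n" using f simple_cycle_subset[OF simple_cycle_pad_of[OF cact]] e by blast
  show "f \<in> kclass e"
  proof (rule ccontr)
    assume "f \<notin> kclass e"
    then have "\<not> kequiv e f" using e \<open>f < n\<close> mem_kclass by blast
    then have "e \<noteq> f" using kequiv_refl by blast
    have "e \<in> {..<n}" "{..<n} - {e, f} \<subseteq> {..<n}" "e \<notin> {..<n} - {e, f}" using e by auto
    then obtain ws es where C: "ucycle_seq {..<n} qa qb ws es" "e \<in> set es"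
      and avoids: "set es \<subseteq> insert e ({..<n} - {e, f})"
      using rtranclp_adj_avoiding[OF e \<open>f < n\<close> \<open>\<not> kequiv e f\<close>] by (rule ucycle_through_edge)
    have "simple_cycle {..<n} qa qb (set es)" using C(1) unfolding simple_cycle_def by blast
    then have "pad_of {..<n} qa qb e = set es" using pad_of_unique[OF cact] C(2) by blast
    then show False using f avoids \<open>e \<noteq> f\<close> by blast
  qed
qed

lemma kequiv_within_crossing:
  assumes "a < b" "b < c" "c < d" "P \<in> \<pi>" "Q \<in> \<pi>" "a \<in> P" "c \<in> P" "b \<in> Q" "d \<in> Q"
    and "a \<le> l" "l < b" "kequiv l m"
  shows "a \<le> m \<and> m < b"
proof -
  have "arc l m a = arc l m c" "arc l m b = arc l m d" using kequivD assms(4-9,12) by blast+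
  then show ?thesis
    using assms(1-3,10,11) unfolding arc_def
    by (cases "m \<le> l") (simp_all add: min_def max_def split: if_splits)
qed

lemma cactus_noncrossing:
  assumes cact: "is_cactus \<pi> {..<n} qa qb"
  shows "noncrossing \<pi>"
proof (rule ccontr)
  assume "\<not> noncrossing \<pi>"
  then obtain a b c d P Q where abcd: "a < b" "b < c" "c < d" and PQ: "P \<in> \<pi>" "Q \<in> \<pi>" "P \<noteq> Q"
    and mem: "a \<in> P" "c \<in> P" "b \<in> Q" "d \<in> Q"
    unfolding noncrossing_def by blast
  have "d < n" using PQ mem block_lt by blast
  have "pad_of {..<n} qa qb l \<subseteq> {a..<b}" if "l \<in> {a..<b}" for l
  proof -
    have l: "a \<le> l" "l < b" "l < n" using that abcd \<open>d < n\<close> by auto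
    have "kclass l \<subseteq> {a..<b}"
      using kequiv_within_crossing[OF abcd PQ(1,2) mem l(1,2)] by (auto simp: mem_kclass)
    then show ?thesis using pad_of_subset_kclass[OF cact l(3)] by blast
  qed
  then have "even (incidences {a..<b} qa qb P)"
    using abcd \<open>d < n\<close> by (intro even_incidences_union_of_pads[OF cact]) auto
  moreover define g where "g l = (of_bool (blk l = P) :: nat)" for l
  have "incidences {a..<b} qa qb P = (\<Sum>l\<in>{a..<b}. g l + g (Suc l))"
    unfolding incidences_def g_def using abcd \<open>d < n\<close> by (intro sum.cong) auto
  moreover have "g a = 1" "g b = 0" using blk_eq PQ mem g_def by auto
  ultimately show False using even_sum_consecutive[of a b g] abcd by simp
qed

section \<open>Orientations\<close>

lemma quot_dsrc: "quot \<pi> (dsrc n ccw) e = (if ccw e then qa e else qb e)"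
  and quot_dtgt: "quot \<pi> (dtgt n ccw) e = (if ccw e then qb e else qa e)"
  by (simp_all add: quot_def dsrc_def dtgt_def cyc_a_def cyc_b_def)

lemma quot_dsrc_dtgt_ends: "{quot \<pi> (dsrc n ccw) e, quot \<pi> (dtgt n ccw) e} = {qa e, qb e}"
  unfolding quot_dsrc quot_dtgt by auto

lemma is_cactus_dquot:
  "is_cactus V E (quot \<pi> (dsrc n ccw)) (quot \<pi> (dtgt n ccw)) = is_cactus V E qa qb"
  by (rule is_cactus_same_ends) (rule quot_dsrc_dtgt_ends)

lemma pads_dquot: "pads E (quot \<pi> (dsrc n ccw)) (quot \<pi> (dtgt n ccw)) = pads E qa qb"
  by (rule pads_same_ends) (rule quot_dsrc_dtgt_ends)

lemma dtgt_eq_at_orientation_switch: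
  assumes nc: "noncrossing \<pi>" and L: "L = sorted_list_of_set (kclass i)" and r: "r < length L"
    and "ccw (L!r)" "\<not> ccw (L!(Suc r mod length L))"
  shows "quot \<pi> (dtgt n ccw) (L!r) = quot \<pi> (dtgt n ccw) (L!(Suc r mod length L))"
  using kclass_next_block[OF nc L r] assms(4,5) by (simp add: quot_dtgt)

lemma oriented_cactus_kblock_uniform:
  assumes oc: "is_oriented_cactus \<pi> {..<n} (quot \<pi> (dsrc n ccw)) (quot \<pi> (dtgt n ccw))"
    and B: "B \<in> kblocks"
  shows "(\<forall>i\<in>B. ccw i) \<or> (\<forall>i\<in>B. \<not> ccw i)"
proof (rule ccontr)
  assume "\<not> ?thesis"
  then obtain p q where pq: "p \<in> B" "q \<in> B" "ccw p" "\<not> ccw q" by blast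
  have "is_cactus \<pi> {..<n} qa qb"
    using oc is_cactus_dquot unfolding is_oriented_cactus_def by simp
  then have nc: "noncrossing \<pi>" by (rule cactus_noncrossing)
  obtain i0 where B_eq: "B = kclass i0" using B kblocks_iff by blast
  define L where "L = sorted_list_of_set B"
  define k where "k = length L"
  have setL: "set L = B" using finite_kclass L_def B_eq by simp
  obtain a b where "a < k" "L!a = p" "b < k" "L!b = q"
    using pq setL by (metis in_set_conv_nth k_def)
  then obtain r where r: "r < k" "ccw (L!r)" "\<not> ccw (L!(Suc r mod k))"
    using cyclic_switch_exists[where f = "\<lambda>r. ccw (L!r)"] pq by metis
  have "Suc r mod k < k" using r by simp
  then have B_mem: "L!r \<in> B" "L!(Suc r mod k) \<in> B" using setL r k_def nth_mem by blast+
  have "L!r \<noteq> L!(Suc r mod k)" using r by auto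
  moreover have "quot \<pi> (dtgt n ccw) (L!r) = quot \<pi> (dtgt n ccw) (L!(Suc r mod k))"
    using dtgt_eq_at_orientation_switch[OF nc L_def[unfolded B_eq]] r B_eq k_def L_def by simp
  moreover have "B \<in> pads {..<n} (quot \<pi> (dsrc n ccw)) (quot \<pi> (dtgt n ccw))"
    using B noncrossing_pads[OF nc] pads_dquot by simp
  then obtain ws es where "dcycle_seq {..<n} (quot \<pi> (dsrc n ccw)) (quot \<pi> (dtgt n ccw)) ws es"
    and "B = set es"
    using oc unfolding is_oriented_cactus_def by blast
  then have "inj_on (quot \<pi> (dtgt n ccw)) B" using dcycle_seq_tgt_inj_on by blast
  ultimately show False using B_mem by (metis inj_onD)
qed

lemma uniform_kblock_dcycle:
  assumes nc: "noncrossing \<pi>" and B: "B \<in> kblocks"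
    and uniform: "(\<forall>i\<in>B. ccw i) \<or> (\<forall>i\<in>B. \<not> ccw i)"
  obtains ws es where "dcycle_seq {..<n} (quot \<pi> (dsrc n ccw)) (quot \<pi> (dtgt n ccw)) ws es"
    and "B = set es"
proof -
  obtain i where "i < n" and B_eq: "B = kclass i" using B kblocks_iff by blast
  define L where "L = sorted_list_of_set B"
  have C: "dcycle_seq {..<n} qa qb (map blk L) L"
    using kclass_dcycle[OF nc \<open>i < n\<close>] L_def B_eq by simp
  have setL: "set L = B" using finite_kclass L_def B_eq by simp
  from uniform show thesis
  proof
    assume "\<forall>i\<in>B. ccw i"
    then have "dcycle_seq {..<n} (quot \<pi> (dsrc n ccw)) (quot \<pi> (dtgt n ccw)) (map blk L) L"
      using setL by (intro dcycle_seq_cong[OF C]) (simp add: quot_dsrc quot_dtgt)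
    then show thesis using that setL by blast
  next
    assume "\<forall>i\<in>B. \<not> ccw i"
    then have "dcycle_seq {..<n} (quot \<pi> (dtgt n ccw)) (quot \<pi> (dsrc n ccw)) (map blk L) L"
      using setL by (intro dcycle_seq_cong[OF C]) (simp add: quot_dsrc quot_dtgt)
    then show thesis using that dcycle_seq_rev setL by (metis set_rev)
  qed
qed

lemma oriented_cactus_iff:
  "is_oriented_cactus \<pi> {..<n} (quot \<pi> (dsrc n ccw)) (quot \<pi> (dtgt n ccw)) \<longleftrightarrow>
     noncrossing \<pi> \<and> (\<forall>B\<in>kblocks. (\<forall>i\<in>B. ccw i) \<or> (\<forall>i\<in>B. \<not> ccw i))"
  (is "?oriented \<longleftrightarrow> _")
proof
  assume ?oriented
  moreover from this have "is_cactus \<pi> {..<n} qa qb"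
    using is_cactus_dquot unfolding is_oriented_cactus_def by simp
  ultimately show "noncrossing \<pi> \<and> (\<forall>B\<in>kblocks. (\<forall>i\<in>B. ccw i) \<or> (\<forall>i\<in>B. \<not> ccw i))"
    using oriented_cactus_kblock_uniform cactus_noncrossing by blast
next
  assume uniform: "noncrossing \<pi> \<and> (\<forall>B\<in>kblocks. (\<forall>i\<in>B. ccw i) \<or> (\<forall>i\<in>B. \<not> ccw i))"
  then have nc: "noncrossing \<pi>" by blast
  show ?oriented
    unfolding is_oriented_cactus_def pads_dquot is_cactus_dquot noncrossing_pads[OF nc]
    using noncrossing_is_cactus[OF nc] uniform_kblock_dcycle[OF nc] uniform by metis
qed

end

theorem proposition2p4:
  fixes n :: nat and \<pi> :: "nat set set" and ccw :: "nat \<Rightarrow> bool"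
  assumes "n \<ge> 1" and "partition_on {..<n} \<pi>"
  shows "(is_cactus \<pi> {..<n} (quot \<pi> (cyc_a n)) (quot \<pi> (cyc_b n)) \<longleftrightarrow> noncrossing \<pi>)
    \<and> (noncrossing \<pi> \<longrightarrow>
         pads {..<n} (quot \<pi> (cyc_a n)) (quot \<pi> (cyc_b n)) = kreweras n \<pi> \<and>
         (\<forall>B\<in>kreweras n \<pi>.
            (\<forall>j<length (sorted_list_of_set B).
               blockof \<pi> (Suc (sorted_list_of_set B ! j) mod n) =
               blockof \<pi> (sorted_list_of_set B ! ((j+1) mod length (sorted_list_of_set B)))) \<and>
            ucycle_seq {..<n} (quot \<pi> (cyc_a n)) (quot \<pi> (cyc_b n))
              (map (blockof \<pi>) (sorted_list_of_set B)) (sorted_list_of_set B)))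
    \<and> (is_oriented_cactus \<pi> {..<n} (quot \<pi> (dsrc n ccw)) (quot \<pi> (dtgt n ccw)) \<longleftrightarrow>
         noncrossing \<pi> \<and> (\<forall>B\<in>kreweras n \<pi>. (\<forall>i\<in>B. ccw i) \<or> (\<forall>i\<in>B. \<not> ccw i)))"
proof -
  interpret cycle_partition n \<pi> using assms by unfold_locales
  have "is_cactus \<pi> {..<n} qa qb \<longleftrightarrow> noncrossing \<pi>"
    using noncrossing_is_cactus cactus_noncrossing by blast
  moreover have "pads {..<n} qa qb = kreweras n \<pi>" if "noncrossing \<pi>"
    using noncrossing_pads kreweras_eq_kblocks that by simp
  moreover have "(\<forall>B\<in>kreweras n \<pi>. (\<forall>i\<in>B. ccw i) \<or> (\<forall>i\<in>B. \<not> ccw i)) \<longleftrightarrow>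
      (\<forall>B\<in>kblocks. (\<forall>i\<in>B. ccw i) \<or> (\<forall>i\<in>B. \<not> ccw i))" if "noncrossing \<pi>"
    using kreweras_eq_kblocks that by simp
  ultimately show ?thesis
    using kblock_cycle kreweras_eq_kblocks oriented_cactus_iff by auto
qed

end
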